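(* Consider problem (P2) without the short-term power constraint, i.e., maximize $\mathbb{E}[R_\nu(P_\nu,\rho_\nu)]$ over policy pairs with $P_\nu\ge0$, $0\le\rho_\nu\le1$, subject to $\mathbb{E}[Q^{\rm NL}_\nu(P_\nu,\rho_\nu)]\ge Q$ and $\mathbb{E}[P_\nu]\le P_{\rm avg}$ (with $Q$ feasible). Given $\lambda,\mu>0$, let $Z(x)=\frac{1-\Omega}{P_sTax}$, $x_1=\frac{4\mu(1-\Omega)}{\lambda P_sTa}$, $x_2=\frac{\mu}{\lambda\Omega P_sTa}$ (so $x_2>x_1$), and for $h_\nu\ge x_1$ let $P^A_{{\rm o},\nu}=\frac1{h_\nu}\Big(-\frac1a\ln\Big(\frac{2}{1+\sqrt{1-4\mu Z(h_\nu)/\lambda}}-1\Big)+b\Big)$. Define $P'_{{\rm ID},\nu}=\max\{1/\mu-\sigma^2/h_\nu,0\}$ and $P'_{{\rm EH},\nu}=0$ if $h_\nu\le x_1$; $P'_{{\rm EH},\nu}=P^A_{{\rm o},\nu}$ if $x_1<h_\nu<x_2$ and $\lambda Q^{\rm NL}_\nu(P^A_{{\rm o},\nu},1)>\mu P^A_{{\rm o},\nu}$, and $0$ if $x_1<h_\nu<x_2$ otherwise; $P'_{{\rm EH},\nu}=P^A_{{\rm o},\nu}$ if $h_\nu\ge x_2$. Set $P_\nu=P'_{{\rm ID},\nu}+P'_{{\rm EH},\nu}$ and $\rho_\nu=0$ if $P_\nu=0$, $\rho_\nu=P'_{{\rm EH},\nu}/P_\nu$ otherwise. If $\lambda=\lambda^{\rm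 NL}>0$, $\mu=\mu^{\rm NL}>0$ are such that $\mathbb{E}[Q^{\rm NL}_\nu(P_\nu,\rho_\nu)]=Q$ and $\mathbb{E}[P_\nu]=P_{\rm avg}$, then $(P_\nu,\rho_\nu)$ is an optimal solution of this problem.
   Context: Standing model: constants $a,b,P_s,T,\sigma^2>0$ are fixed and $\Omega=1/(1+e^{ab})$. Fading is modeled on a probability space carrying independent random variables $h$ (channel power gain, values in $(0,\infty)$, $\mathbb{E}[h]<\infty$) and $U$ (uniform on $[0,1]$). A fading state is $\nu=(h_\nu,U_\nu)$, distributed as $(h,U)$; $\mathbb{E}$ is expectation over the fading state. A policy is a Borel measurable function of the fading state. For a fading state with gain $h_\nu$, transmit power $p\ge0$ and power-splitting ratio $\rho\in[0,1]$: $R_\nu(p,\rho)=\ln\big(1+(1-\rho)h_\nu p/\sigma^2\big)$ (rate, in nats); $\Psi_\nu(p,\rho)=1/(1+e^{-a(\rho h_\nu p-b)})$; $Q^{\rm NL}_\nu(p,\rho)=P_sT(\Psi_\nu(p,\rho)-\Omega)/(1-\Omega)$ (harvested energy). $P_{\rm avg}>0$ is the average power limit and $Q\ge0$ the average energy threshold. *)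

theory Defs
  imports "HOL-Probability.Probability"
begin

definition Omega :: "real \<Rightarrow> real \<Rightarrow> real" where
  "Omega a b = 1 / (1 + exp (a * b))"

definition rate :: "real \<Rightarrow> real \<Rightarrow> real \<Rightarrow> real \<Rightarrow> real" where
  "rate sigma2 h p \<rho> = ln (1 + (1 - \<rho>) * h * p / sigma2)"

definition Psi :: "real \<Rightarrow> real \<Rightarrow> real \<Rightarrow> real \<Rightarrow> real \<Rightarrow> real" where
  "Psi a b h p \<rho> = 1 / (1 + exp (- a * (\<rho> * h * p - b)))"

definition QNL :: "real \<Rightarrow> real \<Rightarrow> real \<Rightarrow> real \<Rightarrow> real \<Rightarrow> real \<Rightarrow> real \<Rightarrow> real" where
  "QNL a b Ps T h p \<rho> = Ps * T * (Psi a b h p \<rho> - Omega a b) / (1 - Omega a b)"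

(* Expectation over the fading state nu = (h, U) *)
definition Exp :: "'s measure \<Rightarrow> ('s \<Rightarrow> real) \<Rightarrow> ('s \<Rightarrow> real) \<Rightarrow> (real \<times> real \<Rightarrow> real) \<Rightarrow> real" where
  "Exp M h U f = (\<integral>\<omega>. f (h \<omega>, U \<omega>) \<partial>M)"

definition feasible_P2 ::
  "'s measure \<Rightarrow> ('s \<Rightarrow> real) \<Rightarrow> ('s \<Rightarrow> real) \<Rightarrow> real \<Rightarrow> real \<Rightarrow> real \<Rightarrow> real \<Rightarrow> real \<Rightarrow> real
   \<Rightarrow> (real \<times> real \<Rightarrow> real) \<Rightarrow> (real \<times> real \<Rightarrow> real) \<Rightarrow> bool" where
  "feasible_P2 M h U a b Ps T Pavg Q P \<rho> \<longleftrightarrow>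
     P \<in> borel_measurable borel \<and> \<rho> \<in> borel_measurable borel \<and>
     (\<forall>\<omega>\<in>space M. 0 \<le> P (h \<omega>, U \<omega>) \<and> 0 \<le> \<rho> (h \<omega>, U \<omega>) \<and> \<rho> (h \<omega>, U \<omega>) \<le> 1) \<and>
     integrable M (\<lambda>\<omega>. P (h \<omega>, U \<omega>)) \<and>
     Exp M h U P \<le> Pavg \<and>
     Exp M h U (\<lambda>\<nu>. QNL a b Ps T (fst \<nu>) (P \<nu>) (\<rho> \<nu>)) \<ge> Q"

definition Zf :: "real \<Rightarrow> real \<Rightarrow> real \<Rightarrow> real \<Rightarrow> real \<Rightarrow> real" where
  "Zf a b Ps T x = (1 - Omega a b) / (Ps * T * a * x)"

definition x1 :: "real \<Rightarrow> real \<Rightarrow> real \<Rightarrow> real \<Rightarrow> real \<Rightarrow> real \<Rightarrow> real" where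
  "x1 a b Ps T lam mu = 4 * mu * (1 - Omega a b) / (lam * Ps * T * a)"

definition x2 :: "real \<Rightarrow> real \<Rightarrow> real \<Rightarrow> real \<Rightarrow> real \<Rightarrow> real \<Rightarrow> real" where
  "x2 a b Ps T lam mu = mu / (lam * Omega a b * Ps * T * a)"

definition PA :: "real \<Rightarrow> real \<Rightarrow> real \<Rightarrow> real \<Rightarrow> real \<Rightarrow> real \<Rightarrow> real \<Rightarrow> real" where
  "PA a b Ps T lam mu h =
     (1 / h) * (- (1 / a) * ln (2 / (1 + sqrt (1 - 4 * mu * Zf a b Ps T h / lam)) - 1) + b)"

definition PID :: "real \<Rightarrow> real \<Rightarrow> real \<Rightarrow> real" where
  "PID sigma2 mu h = max (1 / mu - sigma2 / h) 0"

definition PEH :: "real \<Rightarrow> real \<Rightarrow> real \<Rightarrow> real \<Rightarrow> real \<Rightarrow> real \<Rightarrow> real \<Rightarrow> real" where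
  "PEH a b Ps T lam mu h =
     (if h \<le> x1 a b Ps T lam mu then 0
      else if h < x2 a b Ps T lam mu then
        (if lam * QNL a b Ps T h (PA a b Ps T lam mu h) 1 > mu * PA a b Ps T lam mu h
         then PA a b Ps T lam mu h else 0)
      else PA a b Ps T lam mu h)"

definition Pstar :: "real \<Rightarrow> real \<Rightarrow> real \<Rightarrow> real \<Rightarrow> real \<Rightarrow> real \<Rightarrow> real \<Rightarrow> real \<Rightarrow> real" where
  "Pstar a b Ps T sigma2 lam mu h = PID sigma2 mu h + PEH a b Ps T lam mu h"

definition rhostar :: "real \<Rightarrow> real \<Rightarrow> real \<Rightarrow> real \<Rightarrow> real \<Rightarrow> real \<Rightarrow> real \<Rightarrow> real \<Rightarrow> real" where
  "rhostar a b Ps T sigma2 lam mu h =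
     (if Pstar a b Ps T sigma2 lam mu h = 0 then 0
      else PEH a b Ps T lam mu h / Pstar a b Ps T sigma2 lam mu h)"

end

theory Submission
  imports Defs
begin

text \<open>
  Weak Lagrangian duality, applied pointwise. For a fixed gain \<open>h\<close> and any \<open>p \<ge> 0\<close>,
  \<open>0 \<le> \<rho> \<le> 1\<close>, write \<open>p = (1 - \<rho>) p + \<rho> p\<close>: the Lagrangian \<open>R - \<mu> p + \<lambda> Q\<^sup>N\<^sup>L\<close>
  splits into a water-filling term in the information power \<open>(1 - \<rho>) p\<close>, maximised by
  \<open>P'\<^sub>I\<^sub>D\<close>, and a term in the harvesting power \<open>y = \<rho> p\<close> which, in the variable \<open>t = h y\<close>, is a
  positive multiple of a logistic sigmoid minus a linear function of slope \<open>a x\<^sub>1 / (4 h)\<close>.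
  Such a function is decreasing where the sigmoid's slope \<open>a \<psi> (1 - \<psi>)\<close> is below that slope,
  so on \<open>t \<ge> 0\<close> it is maximal at \<open>t = 0\<close> or at the point \<open>h P\<^sup>A\<close> where \<open>\<psi>\<close> reaches the upper
  root of \<open>a \<psi> (1 - \<psi>) = a x\<^sub>1 / (4 h)\<close>; the thresholds \<open>x\<^sub>1\<close> and \<open>x\<^sub>2\<close> decide which, and
  \<open>P'\<^sub>E\<^sub>H\<close> picks the maximiser. Integrating the pointwise inequality and using that the
  candidate meets both constraints with equality gives optimality. The argument never uses
  the distribution of \<open>(h, U)\<close> nor the assumed feasibility of \<open>Q\<close>.
\<close>

section \<open>A logistic sigmoid minus a linear function\<close>

definition sigmoid :: "real \<Rightarrow> real \<Rightarrow> real \<Rightarrow> real" where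
  "sigmoid a b t = 1 / (1 + exp (- a * (t - b)))"

lemma sigmoid_pos: "0 < sigmoid a b t"
  unfolding sigmoid_def by (simp add: add_pos_pos)

lemma sigmoid_less_one: "sigmoid a b t < 1"
  unfolding sigmoid_def by (simp add: add_pos_pos)

lemma sigmoid_mono: "0 \<le> a \<Longrightarrow> s \<le> t \<Longrightarrow> sigmoid a b s \<le> sigmoid a b t"
  unfolding sigmoid_def
  by (auto intro!: divide_left_mono add_pos_pos mult_pos_pos simp: mult_left_mono)

lemma has_real_derivative_sigmoid:
  "(sigmoid a b has_real_derivative a * sigmoid a b t * (1 - sigmoid a b t)) (at t)"
proof -
  define E where "E = exp (- a * (t - b))"
  have ne: "1 + exp x \<noteq> 0" for x :: real by (smt (verit) exp_gt_zero)
  have "((\<lambda>t. 1 / (1 + exp (- a * (t - b)))) has_real_derivative - (- a * E) / (1 + E)\<^sup>2) (at t)"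
    unfolding E_def by (auto intro!: derivative_eq_intros simp: ne power2_eq_square)
  moreover have "- (- a * E) / (1 + E)\<^sup>2 = a * sigmoid a b t * (1 - sigmoid a b t)"
    unfolding sigmoid_def E_def[symmetric] using ne[of "- a * (t - b)"]
    by (simp add: E_def field_simps power2_eq_square)
  ultimately show ?thesis unfolding sigmoid_def[abs_def] by simp
qed

lemma logistic_slope_le:
  fixes a p s :: real
  assumes "0 \<le> a" "0 \<le> s" "m = a * (1 - s\<^sup>2) / 4" "p \<le> (1 - s) / 2 \<or> (1 + s) / 2 \<le> p"
  shows "a * p * (1 - p) \<le> m"
proof -
  have "0 \<le> (p - (1 - s) / 2) * (p - (1 + s) / 2)"
    using assms(2,4) by (auto intro: mult_nonpos_nonpos)
  moreover have "(p - (1 - s) / 2) * (p - (1 + s) / 2) = (1 - s\<^sup>2) / 4 - p * (1 - p)"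
    by (simp add: field_simps power2_eq_square)
  ultimately have "p * (1 - p) \<le> (1 - s\<^sup>2) / 4" by linarith
  then have "a * (p * (1 - p)) \<le> a * ((1 - s\<^sup>2) / 4)" by (rule mult_left_mono) (use assms(1) in simp)
  then show ?thesis using assms(3) by (simp only: mult.assoc times_divide_eq_right)
qed

lemma logistic_slope_ge:
  fixes a p s :: real
  assumes "0 \<le> a" "m = a * (1 - s\<^sup>2) / 4" "(1 - s) / 2 \<le> p" "p \<le> (1 + s) / 2"
  shows "m \<le> a * p * (1 - p)"
proof -
  have "(p - (1 - s) / 2) * (p - (1 + s) / 2) \<le> 0"
    using assms(3,4) by (auto intro: mult_nonneg_nonpos)
  moreover have "(p - (1 - s) / 2) * (p - (1 + s) / 2) = (1 - s\<^sup>2) / 4 - p * (1 - p)"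
    by (simp add: field_simps power2_eq_square)
  ultimately have "(1 - s\<^sup>2) / 4 \<le> p * (1 - p)" by linarith
  then have "a * ((1 - s\<^sup>2) / 4) \<le> a * (p * (1 - p))" by (rule mult_left_mono) (use assms(1) in simp)
  then show ?thesis using assms(2) by (simp only: mult.assoc times_divide_eq_right)
qed

lemma sigmoid_minus_linear_antimono:
  assumes "s \<le> t" "\<And>x. s \<le> x \<Longrightarrow> x \<le> t \<Longrightarrow> a * sigmoid a b x * (1 - sigmoid a b x) \<le> m"
  shows "sigmoid a b t - m * t \<le> sigmoid a b s - m * s"
proof -
  have "(\<lambda>x. sigmoid a b x - m * x) t \<le> (\<lambda>x. sigmoid a b x - m * x) s"
    by (rule deriv_nonpos_imp_antimono[where g' = "\<lambda>x. a * sigmoid a b x * (1 - sigmoid a b x) - m"])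
      (auto intro!: derivative_eq_intros has_real_derivative_sigmoid assms)
  then show ?thesis by simp
qed

lemma sigmoid_minus_linear_mono:
  assumes "s \<le> t" "\<And>x. s \<le> x \<Longrightarrow> x \<le> t \<Longrightarrow> m \<le> a * sigmoid a b x * (1 - sigmoid a b x)"
  shows "sigmoid a b s - m * s \<le> sigmoid a b t - m * t"
proof -
  have "(\<lambda>x. sigmoid a b x - m * x) s \<le> (\<lambda>x. sigmoid a b x - m * x) t"
    by (rule deriv_nonneg_imp_mono[where g' = "\<lambda>x. a * sigmoid a b x * (1 - sigmoid a b x) - m"])
      (auto intro!: derivative_eq_intros has_real_derivative_sigmoid assms)
  then show ?thesis by simp
qed

lemma sigmoid_minus_linear_antimono_steep:
  assumes "0 < a" "a / 4 \<le> m" "s \<le> t"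
  shows "sigmoid a b t - m * t \<le> sigmoid a b s - m * s"
proof (rule sigmoid_minus_linear_antimono[OF assms(3)])
  fix x
  have "a * sigmoid a b x * (1 - sigmoid a b x) \<le> a / 4"
    using assms(1) by (intro logistic_slope_le[of a 0]) auto
  then show "a * sigmoid a b x * (1 - sigmoid a b x) \<le> m" using assms(2) by linarith
qed

lemma sigmoid_minus_linear_le_upper_level:
  assumes "0 < a" "0 \<le> s" "m = a * (1 - s\<^sup>2) / 4"
    and upper: "sigmoid a b tA = (1 + s) / 2" and t: "(1 - s) / 2 \<le> sigmoid a b t"
  shows "sigmoid a b t - m * t \<le> sigmoid a b tA - m * tA"
proof (cases "tA \<le> t")
  case True
  show ?thesis
  proof (rule sigmoid_minus_linear_antimono[OF True])
    fix x assume "tA \<le> x"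
    then have "(1 + s) / 2 \<le> sigmoid a b x" using sigmoid_mono[of a tA x b] upper assms(1) by simp
    then show "a * sigmoid a b x * (1 - sigmoid a b x) \<le> m"
      using assms(1) by (intro logistic_slope_le[OF _ assms(2,3)]) auto
  qed
next
  case False
  show ?thesis
  proof (rule sigmoid_minus_linear_mono)
    fix x assume "t \<le> x" "x \<le> tA"
    then have "(1 - s) / 2 \<le> sigmoid a b x" "sigmoid a b x \<le> (1 + s) / 2"
      using sigmoid_mono[of a t x b] sigmoid_mono[of a x tA b] upper t assms(1) by auto
    then show "m \<le> a * sigmoid a b x * (1 - sigmoid a b x)"
      using assms(1) by (intro logistic_slope_ge[OF _ assms(3)]) auto
  qed (use False in auto)
qed

lemma sigmoid_minus_linear_le_max:
  assumes "0 < a" "0 \<le> s" "m = a * (1 - s\<^sup>2) / 4"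
    and "sigmoid a b tA = (1 + s) / 2" and "0 \<le> t"
  shows "sigmoid a b t - m * t \<le> max (sigmoid a b 0) (sigmoid a b tA - m * tA)"
proof (cases "(1 - s) / 2 \<le> sigmoid a b t")
  case True
  then show ?thesis using sigmoid_minus_linear_le_upper_level[OF assms(1-4)] by fastforce
next
  case False
  have "sigmoid a b t - m * t \<le> sigmoid a b 0 - m * 0"
  proof (rule sigmoid_minus_linear_antimono[OF \<open>0 \<le> t\<close>])
    fix x assume "x \<le> t"
    then have "sigmoid a b x \<le> (1 - s) / 2" using sigmoid_mono[of a x t b] False assms(1) by auto
    then show "a * sigmoid a b x * (1 - sigmoid a b x) \<le> m"
      using assms(1) by (intro logistic_slope_le[OF _ assms(2,3)]) auto
  qed
  then show ?thesis by simp
qed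

section \<open>The energy-harvesting power\<close>

lemma Omega_pos: "0 < Omega a b"
  unfolding Omega_def by (simp add: add_pos_pos)

lemma Omega_less_half: "0 < a \<Longrightarrow> 0 < b \<Longrightarrow> Omega a b < 1 / 2"
  unfolding Omega_def by (simp add: add_pos_pos)

lemma sigmoid_zero: "sigmoid a b 0 = Omega a b"
  unfolding sigmoid_def Omega_def by simp

lemma QNL_eq_sigmoid:
  "QNL a b Ps T h p \<rho> = Ps * T * (sigmoid a b (\<rho> * h * p) - Omega a b) / (1 - Omega a b)"
  unfolding QNL_def Psi_def sigmoid_def by simp

lemma abs_QNL_le:
  assumes "0 < a" "0 < b" "0 < Ps" "0 < T"
  shows "\<bar>QNL a b Ps T h p \<rho>\<bar> \<le> Ps * T / (1 - Omega a b)"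
proof -
  have "\<bar>sigmoid a b (\<rho> * h * p) - Omega a b\<bar> \<le> 1"
    using sigmoid_pos[of a b "\<rho> * h * p"] sigmoid_less_one[of a b "\<rho> * h * p"]
      Omega_pos[of a b] Omega_less_half[OF assms(1,2)] by (auto simp: abs_le_iff)
  then have "Ps * T * \<bar>sigmoid a b (\<rho> * h * p) - Omega a b\<bar> \<le> Ps * T"
    using assms(3,4) mult_left_mono[of _ 1 "Ps * T"] by simp
  then show ?thesis
    using Omega_less_half[OF assms(1,2)] assms(3,4) by (simp add: QNL_eq_sigmoid abs_mult divide_right_mono)
qed

lemma x1_div_eq: "x1 a b Ps T lam mu / h = 4 * mu * Zf a b Ps T h / lam"
  unfolding x1_def Zf_def by (simp add: divide_inverse inverse_mult_distrib ac_simps)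

lemma x1_eq_x2: "x1 a b Ps T lam mu = 4 * Omega a b * (1 - Omega a b) * x2 a b Ps T lam mu"
  using Omega_pos[of a b] unfolding x1_def x2_def by (simp add: divide_inverse inverse_mult_distrib ac_simps)

lemma lower_root_le_iff:
  fixes c w :: real
  assumes "w \<le> 1 / 2"
  shows "(1 - sqrt (1 - c)) / 2 \<le> w \<longleftrightarrow> c \<le> 4 * w * (1 - w)"
proof -
  have "(1 - sqrt (1 - c)) / 2 \<le> w \<longleftrightarrow> 1 - 2 * w \<le> sqrt (1 - c)" by (auto simp: field_simps)
  also have "\<dots> \<longleftrightarrow> sqrt ((1 - 2 * w)\<^sup>2) \<le> sqrt (1 - c)" using assms by simp
  also have "\<dots> \<longleftrightarrow> (1 - 2 * w)\<^sup>2 \<le> 1 - c" by (rule real_sqrt_le_iff)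
  also have "\<dots> \<longleftrightarrow> c \<le> 4 * w * (1 - w)" by (simp add: algebra_simps power2_eq_square)
  finally show ?thesis .
qed

lemma sigmoid_PA:
  assumes "0 < a" "0 < h" "0 < x1 a b Ps T lam mu" "x1 a b Ps T lam mu \<le> h"
  defines "s \<equiv> sqrt (1 - x1 a b Ps T lam mu / h)"
  shows "sigmoid a b (h * PA a b Ps T lam mu h) = (1 + s) / 2"
    and "b \<le> h * PA a b Ps T lam mu h"
proof -
  have "0 \<le> s" "s < 1" unfolding s_def using assms(2-4) by auto
  then have ratio: "2 / (1 + s) - 1 = (1 - s) / (1 + s)" "0 < (1 - s) / (1 + s)" "(1 - s) / (1 + s) \<le> 1"
    by (auto simp: field_simps)
  have hPA: "h * PA a b Ps T lam mu h = - ln ((1 - s) / (1 + s)) / a + b"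
    unfolding PA_def x1_div_eq[symmetric] s_def[symmetric] ratio(1) using assms(2) by simp
  then have exp_eq: "exp (- a * (h * PA a b Ps T lam mu h - b)) = (1 - s) / (1 + s)"
    using assms(1) ratio(2) by simp
  show "sigmoid a b (h * PA a b Ps T lam mu h) = (1 + s) / 2"
    unfolding sigmoid_def exp_eq using \<open>0 \<le> s\<close> by (simp add: field_simps)
  have "ln ((1 - s) / (1 + s)) \<le> 0" using ratio(2,3) by simp
  then show "b \<le> h * PA a b Ps T lam mu h"
    unfolding hPA using assms(1) by (simp add: divide_nonpos_pos)
qed

lemma eh_lagrangian_eq:
  assumes "0 < a" "0 < b" "0 < Ps" "0 < T" "0 < lam" "0 < h"
  shows "lam * QNL a b Ps T h y 1 - mu * y
    = lam * Ps * T / (1 - Omega a b)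
      * (sigmoid a b (h * y) - a * (x1 a b Ps T lam mu / h) / 4 * (h * y) - Omega a b)"
  using assms Omega_less_half[OF assms(1,2)]
  unfolding QNL_eq_sigmoid x1_def by (simp add: field_simps)

lemma x1_pos:
  assumes "0 < a" "0 < b" "0 < Ps" "0 < T" "0 < lam" "0 < mu"
  shows "0 < x1 a b Ps T lam mu"
  using assms Omega_less_half[OF assms(1,2)] unfolding x1_def by simp

lemma PEH_nonneg:
  assumes "0 < a" "0 < b" "0 < Ps" "0 < T" "0 < lam" "0 < mu" "0 < h"
  shows "0 \<le> PEH a b Ps T lam mu h"
proof -
  have "0 \<le> PA a b Ps T lam mu h" if "x1 a b Ps T lam mu < h"
  proof -
    have "0 < h * PA a b Ps T lam mu h"
      using sigmoid_PA(2)[OF assms(1,7) x1_pos[OF assms(1-6)]] that assms(2) by simp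
    then show ?thesis using assms(7) by (simp add: zero_less_mult_iff)
  qed
  then show ?thesis unfolding PEH_def by auto
qed

lemma eh_lagrangian_le_iff:
  assumes "0 < a" "0 < b" "0 < Ps" "0 < T" "0 < lam" "0 < h"
    and "m = a * (x1 a b Ps T lam mu / h) / 4"
  shows "lam * QNL a b Ps T h y 1 - mu * y \<le> lam * QNL a b Ps T h z 1 - mu * z
    \<longleftrightarrow> sigmoid a b (h * y) - m * (h * y) \<le> sigmoid a b (h * z) - m * (h * z)"
proof -
  have K: "0 < lam * Ps * T / (1 - Omega a b)"
    using assms(3-5) Omega_less_half[OF assms(1,2)] by simp
  show ?thesis
    unfolding eh_lagrangian_eq[OF assms(1-6)] assms(7)[symmetric] mult_le_cancel_left_pos[OF K] by simp
qed

lemma x2_le_iff: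
  assumes "0 < a" "0 < b" "0 < h"
  shows "x2 a b Ps T lam mu \<le> h \<longleftrightarrow> (1 - sqrt (1 - x1 a b Ps T lam mu / h)) / 2 \<le> Omega a b"
proof -
  have c: "0 < 4 * Omega a b * (1 - Omega a b)"
    using Omega_pos[of a b] Omega_less_half[OF assms(1,2)] by simp
  have "x2 a b Ps T lam mu \<le> h \<longleftrightarrow> x1 a b Ps T lam mu / h \<le> 4 * Omega a b * (1 - Omega a b)"
    unfolding x1_eq_x2 pos_divide_le_eq[OF assms(3)] mult.commute[of h] mult_le_cancel_left_pos[OF c] ..
  also have "\<dots> \<longleftrightarrow> (1 - sqrt (1 - x1 a b Ps T lam mu / h)) / 2 \<le> Omega a b"
    using lower_root_le_iff Omega_less_half[OF assms(1,2)] by simp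
  finally show ?thesis .
qed

lemma PEH_maximizes_eh_lagrangian:
  assumes "0 < a" "0 < b" "0 < Ps" "0 < T" "0 < lam" "0 < mu" "0 < h" "0 \<le> y"
  shows "lam * QNL a b Ps T h y 1 - mu * y
    \<le> lam * QNL a b Ps T h (PEH a b Ps T lam mu h) 1 - mu * PEH a b Ps T lam mu h"
proof -
  define m where "m = a * (x1 a b Ps T lam mu / h) / 4"
  define s where "s = sqrt (1 - x1 a b Ps T lam mu / h)"
  define tA where "tA = h * PA a b Ps T lam mu h"
  note reduce = eh_lagrangian_le_iff[OF assms(1-5,7) m_def]
  have hy: "0 \<le> h * y" using assms(7,8) by simp
  have upper: "0 \<le> s" "m = a * (1 - s\<^sup>2) / 4" "sigmoid a b tA = (1 + s) / 2"
    if "x1 a b Ps T lam mu < h"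
    using that assms(7) sigmoid_PA(1)[OF assms(1,7) x1_pos[OF assms(1-6)]]
    unfolding m_def s_def tA_def by auto
  consider (steep) "h \<le> x1 a b Ps T lam mu"
    | (middle) "x1 a b Ps T lam mu < h" "h < x2 a b Ps T lam mu"
    | (flat) "x1 a b Ps T lam mu < h" "x2 a b Ps T lam mu \<le> h" by linarith
  then show ?thesis
  proof cases
    case steep
    then have "a / 4 \<le> m" using assms(1,7) unfolding m_def by (simp add: field_simps)
    then show ?thesis
      using steep sigmoid_minus_linear_antimono_steep[OF assms(1) _ hy] unfolding reduce PEH_def by simp
  next
    case middle
    have QNL_0: "QNL a b Ps T h 0 1 = 0" by (simp add: QNL_eq_sigmoid sigmoid_zero)
    have "PEH a b Ps T lam mu h = (if sigmoid a b 0 < sigmoid a b tA - m * tA then tA / h else 0)"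
      using middle reduce[of "PA a b Ps T lam mu h" 0] QNL_0 assms(7)
      unfolding PEH_def tA_def by (auto simp: not_le[symmetric])
    then show ?thesis
      using sigmoid_minus_linear_le_max[OF assms(1) upper[OF middle(1)] hy] assms(7)
      unfolding reduce by (auto simp: le_max_iff_disj)
  next
    case flat
    \<comment> \<open>beyond \<open>x\<^sub>2\<close> the sigmoid at \<open>0\<close> already lies above the lower root\<close>
    then have "(1 - s) / 2 \<le> sigmoid a b (h * y)"
      using x2_le_iff[OF assms(1,2,7)] sigmoid_mono[of a 0 "h * y" b] hy assms(1)
      unfolding s_def sigmoid_zero by simp
    then show ?thesis
      using flat sigmoid_minus_linear_le_upper_level[OF assms(1) upper[OF flat(1)]] assms(7)
      unfolding reduce PEH_def tA_def by simp
  qed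
qed

section \<open>The pointwise Lagrangian\<close>

lemma PID_maximizes_id_lagrangian:
  assumes "0 < sigma2" "0 < h" "0 < mu" "0 \<le> x"
  shows "ln (1 + h * x / sigma2) - mu * x
    \<le> ln (1 + h * PID sigma2 mu h / sigma2) - mu * PID sigma2 mu h"
proof -
  define x' where "x' = PID sigma2 mu h"
  have "0 \<le> x'" unfolding x'_def PID_def by simp
  then have pos: "0 < sigma2 + h * x'" "0 < sigma2 + h * x" using assms by (simp_all add: add_pos_nonneg)
  have "ln (1 + h * x / sigma2) - ln (1 + h * x' / sigma2) = ln ((sigma2 + h * x) / (sigma2 + h * x'))"
    using assms(1) pos by (simp add: ln_div field_simps)
  also have "\<dots> \<le> (sigma2 + h * x) / (sigma2 + h * x') - 1"
    using pos by (intro ln_le_minus_one) simp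
  also have "\<dots> = h * (x - x') / (sigma2 + h * x')" using pos by (simp add: field_simps)
  also have "\<dots> \<le> mu * (x - x')"
  proof (cases "sigma2 / h < 1 / mu")
    case True
    then have "sigma2 + h * x' = h / mu" using assms(2) unfolding x'_def PID_def by (simp add: field_simps)
    then show ?thesis using assms(2,3) by simp
  next
    case False
    then have "x' = 0" "h / sigma2 \<le> mu"
      using assms(1-3) unfolding x'_def PID_def by (auto simp: field_simps)
    then show ?thesis using assms(4) mult_right_mono[of "h / sigma2" mu x] by simp
  qed
  finally show ?thesis unfolding x'_def by (simp add: right_diff_distrib)
qed

lemma mult_PID_le: "0 < h \<Longrightarrow> 0 < mu \<Longrightarrow> 0 \<le> sigma2 \<Longrightarrow> h * PID sigma2 mu h \<le> h / mu"
  unfolding PID_def by (auto simp: max_def field_simps)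

lemma rhostar_mult_Pstar:
  assumes "0 \<le> PEH a b Ps T lam mu h"
  shows "rhostar a b Ps T sigma2 lam mu h * Pstar a b Ps T sigma2 lam mu h = PEH a b Ps T lam mu h"
    and "(1 - rhostar a b Ps T sigma2 lam mu h) * Pstar a b Ps T sigma2 lam mu h = PID sigma2 mu h"
proof -
  have "0 \<le> PID sigma2 mu h" unfolding PID_def by simp
  then show *: "rhostar a b Ps T sigma2 lam mu h * Pstar a b Ps T sigma2 lam mu h = PEH a b Ps T lam mu h"
    unfolding rhostar_def using assms by (auto simp: Pstar_def)
  then show "(1 - rhostar a b Ps T sigma2 lam mu h) * Pstar a b Ps T sigma2 lam mu h = PID sigma2 mu h"
    by (simp add: algebra_simps Pstar_def)
qed

lemma Pstar_nonneg: "0 \<le> PEH a b Ps T lam mu h \<Longrightarrow> 0 \<le> Pstar a b Ps T sigma2 lam mu h"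
  unfolding Pstar_def PID_def by simp

lemma rhostar_bounds:
  assumes "0 \<le> PEH a b Ps T lam mu h"
  shows "0 \<le> rhostar a b Ps T sigma2 lam mu h" "rhostar a b Ps T sigma2 lam mu h \<le> 1"
  using assms unfolding rhostar_def Pstar_def PID_def by (auto simp: divide_le_eq)

lemma lagrangian_le_candidate:
  assumes "0 < a" "0 < b" "0 < Ps" "0 < T" "0 < lam" "0 < mu" "0 < sigma2" "0 < h"
    and "0 \<le> p" "0 \<le> \<rho>" "\<rho> \<le> 1"
  shows "rate sigma2 h p \<rho> - mu * p + lam * QNL a b Ps T h p \<rho>
    \<le> rate sigma2 h (Pstar a b Ps T sigma2 lam mu h) (rhostar a b Ps T sigma2 lam mu h)
      - mu * Pstar a b Ps T sigma2 lam mu h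
      + lam * QNL a b Ps T h (Pstar a b Ps T sigma2 lam mu h) (rhostar a b Ps T sigma2 lam mu h)"
proof -
  have rate_eq: "rate sigma2 h q r = ln (1 + h * ((1 - r) * q) / sigma2)" for q r
    unfolding rate_def by (simp add: ac_simps)
  have QNL_eq: "QNL a b Ps T h q r = QNL a b Ps T h (r * q) 1" for q r
    unfolding QNL_eq_sigmoid by (simp add: ac_simps)
  note split = rhostar_mult_Pstar[OF PEH_nonneg[OF assms(1-6,8)], of sigma2]
  have "rate sigma2 h p \<rho> - mu * p + lam * QNL a b Ps T h p \<rho>
      = (ln (1 + h * ((1 - \<rho>) * p) / sigma2) - mu * ((1 - \<rho>) * p))
        + (lam * QNL a b Ps T h (\<rho> * p) 1 - mu * (\<rho> * p))"
    unfolding rate_eq QNL_eq[of p] by (simp add: algebra_simps)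
  also have "\<dots> \<le> (ln (1 + h * PID sigma2 mu h / sigma2) - mu * PID sigma2 mu h)
        + (lam * QNL a b Ps T h (PEH a b Ps T lam mu h) 1 - mu * PEH a b Ps T lam mu h)"
    using assms(9-11)
    by (intro add_mono PID_maximizes_id_lagrangian PEH_maximizes_eh_lagrangian) (use assms in auto)
  also have "\<dots> = rate sigma2 h (Pstar a b Ps T sigma2 lam mu h) (rhostar a b Ps T sigma2 lam mu h)
      - mu * Pstar a b Ps T sigma2 lam mu h
      + lam * QNL a b Ps T h (Pstar a b Ps T sigma2 lam mu h) (rhostar a b Ps T sigma2 lam mu h)"
    unfolding rate_eq QNL_eq[of "Pstar a b Ps T sigma2 lam mu h"] split by (simp add: Pstar_def algebra_simps)
  finally show ?thesis .
qed

section \<open>Weak duality\<close>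

lemma integral_le_of_lagrangian_le:
  fixes R G P R' G' P' :: "'a \<Rightarrow> real"
  assumes "integrable M G" "integrable M P" "integrable M R'" "integrable M G'" "integrable M P'"
    and "\<And>x. x \<in> space M \<Longrightarrow> R x - mu * P x + lam * G x \<le> R' x - mu * P' x + lam * G' x"
    and "0 \<le> mu" "0 \<le> lam" "integral\<^sup>L M P \<le> integral\<^sup>L M P'" "integral\<^sup>L M G' \<le> integral\<^sup>L M G"
    and "0 \<le> integral\<^sup>L M R'"
  shows "integral\<^sup>L M R \<le> integral\<^sup>L M R'"
proof (cases "integrable M R")
  case True
  have "(\<integral>x. R x - mu * P x + lam * G x \<partial>M) \<le> (\<integral>x. R' x - mu * P' x + lam * G' x \<partial>M)"
    using True assms(1-6) by (intro integral_mono) auto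
  then have "integral\<^sup>L M R - mu * integral\<^sup>L M P + lam * integral\<^sup>L M G
      \<le> integral\<^sup>L M R' - mu * integral\<^sup>L M P' + lam * integral\<^sup>L M G'"
    using True assms(1-5) by simp
  moreover have "mu * integral\<^sup>L M P \<le> mu * integral\<^sup>L M P'" "lam * integral\<^sup>L M G' \<le> lam * integral\<^sup>L M G"
    using assms(7-10) by (simp_all add: mult_left_mono)
  ultimately show ?thesis by linarith
next
  case False
  then show ?thesis using assms(11) by (simp add: not_integrable_integral_eq)
qed

lemma borel_measurable_PEH: "PEH a b Ps T lam mu \<in> borel_measurable borel"
  unfolding PEH_def[abs_def] QNL_def Psi_def PA_def Zf_def by measurable

lemma borel_measurable_Pstar: "Pstar a b Ps T sigma2 lam mu \<in> borel_measurable borel"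
  unfolding Pstar_def[abs_def] PID_def using borel_measurable_PEH by measurable

lemma borel_measurable_rhostar: "rhostar a b Ps T sigma2 lam mu \<in> borel_measurable borel"
  unfolding rhostar_def[abs_def] using borel_measurable_PEH borel_measurable_Pstar by measurable

lemma (in finite_measure) integrable_QNL:
  assumes "0 < a" "0 < b" "0 < Ps" "0 < T"
    and "g \<in> borel_measurable M" "p \<in> borel_measurable M" "r \<in> borel_measurable M"
  shows "integrable M (\<lambda>x. QNL a b Ps T (g x) (p x) (r x))"
proof (rule integrable_const_bound)
  show "AE x in M. norm (QNL a b Ps T (g x) (p x) (r x)) \<le> Ps * T / (1 - Omega a b)"
    using abs_QNL_le[OF assms(1-4)] by simp
  show "(\<lambda>x. QNL a b Ps T (g x) (p x) (r x)) \<in> borel_measurable M"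
    unfolding QNL_def Psi_def using assms(5-7) by measurable
qed

lemma rate_candidate_bounds:
  assumes "0 < a" "0 < b" "0 < Ps" "0 < T" "0 < lam" "0 < mu" "0 < sigma2" "0 < h"
  shows "0 \<le> rate sigma2 h (Pstar a b Ps T sigma2 lam mu h) (rhostar a b Ps T sigma2 lam mu h)"
    and "rate sigma2 h (Pstar a b Ps T sigma2 lam mu h) (rhostar a b Ps T sigma2 lam mu h) \<le> h / (mu * sigma2)"
proof -
  have "rate sigma2 h (Pstar a b Ps T sigma2 lam mu h) (rhostar a b Ps T sigma2 lam mu h)
      = ln (1 + h * PID sigma2 mu h / sigma2)"
    using rhostar_mult_Pstar(2)[OF PEH_nonneg[OF assms(1-6,8)], of sigma2]
    unfolding rate_def by (simp add: ac_simps)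
  moreover have "0 \<le> h * PID sigma2 mu h / sigma2"
    using assms(7,8) unfolding PID_def by simp
  moreover have "h * PID sigma2 mu h / sigma2 \<le> h / (mu * sigma2)"
    using mult_PID_le[OF assms(8,6), of sigma2] assms(7) by (simp add: divide_right_mono field_simps)
  ultimately show "0 \<le> rate sigma2 h (Pstar a b Ps T sigma2 lam mu h) (rhostar a b Ps T sigma2 lam mu h)"
    and "rate sigma2 h (Pstar a b Ps T sigma2 lam mu h) (rhostar a b Ps T sigma2 lam mu h) \<le> h / (mu * sigma2)"
    using ln_add_one_self_le_self by (auto intro: order_trans)
qed

lemma integrable_Pstar:
  assumes "Exp M h U (\<lambda>\<nu>. Pstar a b Ps T sigma2 lam mu (fst \<nu>)) = Pavg" "Pavg \<noteq> 0"
  shows "integrable M (\<lambda>\<omega>. Pstar a b Ps T sigma2 lam mu (h \<omega>))"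
  \<comment> \<open>a non-integrable function has Bochner integral 0\<close>
  using assms not_integrable_integral_eq unfolding Exp_def by fastforce

lemma integrable_rate_candidate:
  assumes "h \<in> borel_measurable M" "\<forall>\<omega>\<in>space M. 0 < h \<omega>" "integrable M h"
    and "0 < a" "0 < b" "0 < Ps" "0 < T" "0 < lam" "0 < mu" "0 < sigma2"
  shows "integrable M (\<lambda>\<omega>. rate sigma2 (h \<omega>)
    (Pstar a b Ps T sigma2 lam mu (h \<omega>)) (rhostar a b Ps T sigma2 lam mu (h \<omega>)))"
proof (rule Bochner_Integration.integrable_bound[where f = "\<lambda>\<omega>. h \<omega> / (mu * sigma2)"])
  show "integrable M (\<lambda>\<omega>. h \<omega> / (mu * sigma2))" using assms(3) by simp
  show "(\<lambda>\<omega>. rate sigma2 (h \<omega>) (Pstar a b Ps T sigma2 lam mu (h \<omega>))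
      (rhostar a b Ps T sigma2 lam mu (h \<omega>))) \<in> borel_measurable M"
    unfolding rate_def using assms(1) borel_measurable_Pstar borel_measurable_rhostar by measurable
  show "AE \<omega> in M. norm (rate sigma2 (h \<omega>) (Pstar a b Ps T sigma2 lam mu (h \<omega>))
      (rhostar a b Ps T sigma2 lam mu (h \<omega>))) \<le> norm (h \<omega> / (mu * sigma2))"
  proof (rule AE_I2)
    fix \<omega> assume "\<omega> \<in> space M"
    then have "0 < h \<omega>" using assms(2) by blast
    then show "norm (rate sigma2 (h \<omega>) (Pstar a b Ps T sigma2 lam mu (h \<omega>))
        (rhostar a b Ps T sigma2 lam mu (h \<omega>))) \<le> norm (h \<omega> / (mu * sigma2))"
      using rate_candidate_bounds[OF assms(4-10)] assms(9,10) by simp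
  qed
qed

lemma feasible_P2_candidate:
  assumes "\<forall>\<omega>\<in>space M. 0 < h \<omega>"
    and "0 < a" "0 < b" "0 < Ps" "0 < T" "0 < lam" "0 < mu" "Pavg \<noteq> 0"
    and "Exp M h U (\<lambda>\<nu>. QNL a b Ps T (fst \<nu>) (Pstar a b Ps T sigma2 lam mu (fst \<nu>))
                                          (rhostar a b Ps T sigma2 lam mu (fst \<nu>))) = Q"
    and "Exp M h U (\<lambda>\<nu>. Pstar a b Ps T sigma2 lam mu (fst \<nu>)) = Pavg"
  shows "feasible_P2 M h U a b Ps T Pavg Q
    (\<lambda>\<nu>. Pstar a b Ps T sigma2 lam mu (fst \<nu>)) (\<lambda>\<nu>. rhostar a b Ps T sigma2 lam mu (fst \<nu>))"
  unfolding feasible_P2_def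
proof (intro conjI ballI)
  show "(\<lambda>\<nu>::real \<times> real. Pstar a b Ps T sigma2 lam mu (fst \<nu>)) \<in> borel_measurable borel"
    "(\<lambda>\<nu>::real \<times> real. rhostar a b Ps T sigma2 lam mu (fst \<nu>)) \<in> borel_measurable borel"
    unfolding borel_prod[symmetric] using borel_measurable_Pstar borel_measurable_rhostar by measurable
  fix \<omega> assume "\<omega> \<in> space M"
  then have "0 \<le> PEH a b Ps T lam mu (h \<omega>)" using assms(1-7) PEH_nonneg by blast
  then show "0 \<le> Pstar a b Ps T sigma2 lam mu (fst (h \<omega>, U \<omega>))"
    "0 \<le> rhostar a b Ps T sigma2 lam mu (fst (h \<omega>, U \<omega>))"
    "rhostar a b Ps T sigma2 lam mu (fst (h \<omega>, U \<omega>)) \<le> 1"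
    using Pstar_nonneg rhostar_bounds by simp_all
qed (use assms(9,10) integrable_Pstar[OF assms(10,8)] in auto)

lemma Exp_rate_le_candidate:
  assumes "finite_measure M" "h \<in> borel_measurable M" "U \<in> borel_measurable M"
    and "\<forall>\<omega>\<in>space M. 0 < h \<omega>" "integrable M h"
    and "0 < a" "0 < b" "0 < Ps" "0 < T" "0 < sigma2" "0 < lam" "0 < mu" "Pavg \<noteq> 0"
    and "Exp M h U (\<lambda>\<nu>. QNL a b Ps T (fst \<nu>) (Pstar a b Ps T sigma2 lam mu (fst \<nu>))
                                          (rhostar a b Ps T sigma2 lam mu (fst \<nu>))) = Q"
    and "Exp M h U (\<lambda>\<nu>. Pstar a b Ps T sigma2 lam mu (fst \<nu>)) = Pavg"
    and feasible: "feasible_P2 M h U a b Ps T Pavg Q P \<rho>"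
  shows "Exp M h U (\<lambda>\<nu>. rate sigma2 (fst \<nu>) (P \<nu>) (\<rho> \<nu>))
    \<le> Exp M h U (\<lambda>\<nu>. rate sigma2 (fst \<nu>) (Pstar a b Ps T sigma2 lam mu (fst \<nu>))
                                          (rhostar a b Ps T sigma2 lam mu (fst \<nu>)))"
proof -
  interpret finite_measure M by fact
  have policy: "P \<in> borel_measurable borel" "\<rho> \<in> borel_measurable borel"
    "\<forall>\<omega>\<in>space M. 0 \<le> P (h \<omega>, U \<omega>) \<and> 0 \<le> \<rho> (h \<omega>, U \<omega>) \<and> \<rho> (h \<omega>, U \<omega>) \<le> 1"
    "integrable M (\<lambda>\<omega>. P (h \<omega>, U \<omega>))" "Exp M h U P \<le> Pavg"
    "Q \<le> Exp M h U (\<lambda>\<nu>. QNL a b Ps T (fst \<nu>) (P \<nu>) (\<rho> \<nu>))"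
    using feasible unfolding feasible_P2_def by auto
  have state: "(\<lambda>\<omega>. (h \<omega>, U \<omega>)) \<in> M \<rightarrow>\<^sub>M (borel :: (real \<times> real) measure)"
    unfolding borel_prod[symmetric] using assms(2,3) by measurable
  define R where "R \<omega> = rate sigma2 (h \<omega>) (P (h \<omega>, U \<omega>)) (\<rho> (h \<omega>, U \<omega>))" for \<omega>
  define G where "G \<omega> = QNL a b Ps T (h \<omega>) (P (h \<omega>, U \<omega>)) (\<rho> (h \<omega>, U \<omega>))" for \<omega>
  define P' where "P' \<omega> = Pstar a b Ps T sigma2 lam mu (h \<omega>)" for \<omega>
  define \<rho>' where "\<rho>' \<omega> = rhostar a b Ps T sigma2 lam mu (h \<omega>)" for \<omega>
  define R' where "R' \<omega> = rate sigma2 (h \<omega>) (P' \<omega>) (\<rho>' \<omega>)" for \<omega>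
  define G' where "G' \<omega> = QNL a b Ps T (h \<omega>) (P' \<omega>) (\<rho>' \<omega>)" for \<omega>
  have candidate: "P' \<in> borel_measurable M" "\<rho>' \<in> borel_measurable M"
    unfolding P'_def \<rho>'_def
    by (fact measurable_compose[OF assms(2) borel_measurable_Pstar]
        measurable_compose[OF assms(2) borel_measurable_rhostar])+
  have "integral\<^sup>L M R \<le> integral\<^sup>L M R'"
  proof (rule integral_le_of_lagrangian_le[where mu = mu and lam = lam
        and P = "\<lambda>\<omega>. P (h \<omega>, U \<omega>)" and G = G and P' = P' and G' = G'])
    show "integrable M G" unfolding G_def
      using assms(2) measurable_compose[OF state policy(1)] measurable_compose[OF state policy(2)]
      by (intro integrable_QNL[OF assms(6-9)])
    show "integrable M G'" unfolding G'_def
      using assms(2) candidate by (intro integrable_QNL[OF assms(6-9)])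
    show "integrable M P'" unfolding P'_def by (rule integrable_Pstar[OF assms(15,13)])
    show "integrable M R'" unfolding R'_def P'_def \<rho>'_def
      using assms(2,4,5) by (rule integrable_rate_candidate) (use assms in auto)
    show "R \<omega> - mu * P (h \<omega>, U \<omega>) + lam * G \<omega> \<le> R' \<omega> - mu * P' \<omega> + lam * G' \<omega>"
      if "\<omega> \<in> space M" for \<omega>
      unfolding R_def G_def R'_def G'_def P'_def \<rho>'_def
      using that assms(4) policy(3) by (intro lagrangian_le_candidate) (use assms in auto)
    show "0 \<le> integral\<^sup>L M R'"
      using assms(4) rate_candidate_bounds(1)[OF assms(6-9,11,12,10)]
      unfolding R'_def P'_def \<rho>'_def by (auto intro!: integral_nonneg_AE)
    show "(\<integral>\<omega>. P (h \<omega>, U \<omega>) \<partial>M) \<le> integral\<^sup>L M P'"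
      using policy(5) assms(15) unfolding Exp_def P'_def by simp
    show "integral\<^sup>L M G' \<le> integral\<^sup>L M G"
      using policy(6) assms(14) unfolding Exp_def G_def G'_def P'_def \<rho>'_def by simp
  qed (use policy(4) assms(11,12) in auto)
  then show ?thesis unfolding Exp_def R_def R'_def P'_def \<rho>'_def by simp
qed

theorem lemma5:
  fixes M :: "'s measure" and h U :: "'s \<Rightarrow> real"
    and a b Ps T sigma2 Pavg Q lam mu :: real
  assumes "prob_space M"
    and "h \<in> borel_measurable M" and "U \<in> borel_measurable M"
    and "prob_space.indep_var M borel h borel U"
    and "\<forall>\<omega>\<in>space M. 0 < h \<omega>"
    and "integrable M h"
    and "distr M lborel U = uniform_measure lborel {0..1}"
    and "a > 0" "b > 0" "Ps > 0" "T > 0" "sigma2 > 0"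
    and "Pavg > 0" "Q \<ge> 0"
    and "\<exists>P \<rho>. feasible_P2 M h U a b Ps T Pavg Q P \<rho>"
    and "lam > 0" "mu > 0"
    and "Exp M h U (\<lambda>\<nu>. QNL a b Ps T (fst \<nu>) (Pstar a b Ps T sigma2 lam mu (fst \<nu>))
                                            (rhostar a b Ps T sigma2 lam mu (fst \<nu>))) = Q"
    and "Exp M h U (\<lambda>\<nu>. Pstar a b Ps T sigma2 lam mu (fst \<nu>)) = Pavg"
  shows "feasible_P2 M h U a b Ps T Pavg Q
           (\<lambda>\<nu>. Pstar a b Ps T sigma2 lam mu (fst \<nu>)) (\<lambda>\<nu>. rhostar a b Ps T sigma2 lam mu (fst \<nu>))
       \<and> (\<forall>P \<rho>. feasible_P2 M h U a b Ps T Pavg Q P \<rho> \<longrightarrow>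
            Exp M h U (\<lambda>\<nu>. rate sigma2 (fst \<nu>) (P \<nu>) (\<rho> \<nu>))
            \<le> Exp M h U (\<lambda>\<nu>. rate sigma2 (fst \<nu>) (Pstar a b Ps T sigma2 lam mu (fst \<nu>))
                                              (rhostar a b Ps T sigma2 lam mu (fst \<nu>))))"
proof -
  have "Pavg \<noteq> 0" using assms(13) by simp
  then show ?thesis
    using feasible_P2_candidate[OF assms(5,8-11,16,17) _ assms(18,19)]
      Exp_rate_le_candidate[OF prob_space.finite_measure[OF assms(1)] assms(2,3,5,6,8-12,16,17) _ assms(18,19)]
    by blast
qed

end
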